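(* Let $P:=\operatorname{conv}\{p_0,p_1,p_2\}$ such that $p_0,p_1,p_2 \in \mathbb{Z}^2$ are the only integer points in $P$. Let $Q:=\operatorname{conv}\{q_0,q_1,q_2\}$ be a triangle whose vertices are given by the barycentric coordinates with respect to $P$, that is, by a $3\times 3$-matrix $B$ such that \[ \begin{pmatrix} q_0^\top & 1 \\ q_1^\top & 1 \\ q_2^\top & 1 \end{pmatrix} = B \begin{pmatrix} p_0^\top & 1 \\ p_1^\top & 1 \\ p_2^\top & 1 \end{pmatrix}. \] Then \[ \operatorname{lw}(Q) = \min \{ \|D B z\|_\infty : z \in \mathbb{Z}^3 \text{ and the coordinates of } z \text{ are not all equal}\}, \] where \[ D:=\begin{pmatrix} -1 & 1 & 0 \\ 0 & -1 & 1 \\ 1 & 0 & -1 \end{pmatrix}. \] Furthermore, if $p_i=(1-x_i) q_{i+1} + x_i q_{i+2}$ for $i=0,1,2$ (indices modulo 3) with $0<x_i<1$ (that is, $Q$ is circumscribed about $P$), then \[ \operatorname{lw}(Q) = \frac{\min \{ \max_{i=0,1,2} |x_i y_i + (1-x_{i+1}) y_{i+1}| : y \in \mathbb{Z}^3 \setminus\{o\},\ y_0+y_1+y_2=0\}}{x_0x_1x_2 + (1-x_0)(1-x_1)(1-x_2)} \] and \[ \operatorname{area}(Q) = \frac{1}{2 (x_0x_1x_2 + (1-x_0)(1-x_1)(1-x_2))}. \]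
   Context: Vectors in $\mathbb{R}^2$ are column vectors, $^\top$ denotes transposition, $o$ the origin, and $\|\cdot\|_\infty$ the maximum norm. For a closed convex set $K\subseteq\mathbb{R}^2$ with non-empty interior, the width function is $w(K,u):=\max\{u^\top x : x\in K\}-\min\{u^\top x: x\in K\}$ for $u\in\mathbb{R}^2$, and the lattice width is $\operatorname{lw}(K):=\min\{w(K,u): u\in\mathbb{Z}^2\setminus\{o\}\}$. Sequences with 3 elements are indexed modulo 3. *)

theory Defs
  imports "HOL-Analysis.Analysis"
begin

definition int_vec :: "real^'n \<Rightarrow> bool" where
  "int_vec v \<longleftrightarrow> (\<forall>i. v $ i \<in> \<int>)"

definition width_fun :: "(real^2) set \<Rightarrow> real^2 \<Rightarrow> real" where
  "width_fun K u = (SUP x\<in>K. u \<bullet> x) - (INF x\<in>K. u \<bullet> x)"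

definition lattice_width :: "(real^2) set \<Rightarrow> real" where
  "lattice_width K = (INF u\<in>{u. int_vec u \<and> u \<noteq> 0}. width_fun K u)"

definition homrow :: "real^2 \<Rightarrow> real^3" where
  "homrow v = vector [v $ 1, v $ 2, 1]"

definition hommat :: "real^2 \<Rightarrow> real^2 \<Rightarrow> real^2 \<Rightarrow> real^3^3" where
  "hommat a b c = vector [homrow a, homrow b, homrow c]"

definition Dmat :: "real^3^3" where
  "Dmat = vector [vector [-1, 1, 0], vector [0, -1, 1], vector [1, 0, -1]]"

end

theory Submission
  imports Defs
begin

(* An empty lattice triangle P is unimodular: if a lattice vector had non-integral coordinates
   with respect to the edges of P, reducing them modulo 1 (and reflecting through the midpoint of
   an edge if their sum exceeds 1) would produce a lattice point of P that is not a vertex.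
   Consequently the vectors (u.p0 + t, u.p1 + t, u.p2 + t) with u in Z^2 - {0} and t in Z are
   exactly the nonconstant vectors of Z^3.  The barycentric matrix B maps such a vector to
   (u.q0 + t, u.q1 + t, u.q2 + t), and D turns that into the edge differences of Q in direction u,
   whose maximum norm is the width w(Q,u).  In the circumscribed case the edge differences along P
   are combinations of those along Q scaled by x0 x1 x2 + (1-x0)(1-x1)(1-x2); the same factor
   relates the two determinants, and |det P| = 1 gives the area of Q. *)

definition cross2 :: "real^2 \<Rightarrow> real^2 \<Rightarrow> real" where
  "cross2 x y = x$1 * y$2 - x$2 * y$1"

lemma inner_real2: "u \<bullet> (v::real^2) = u$1 * v$1 + u$2 * v$2"
  by (simp add: inner_vec_def sum_2)

lemma int_vec_real2: "int_vec (v::real^2) \<longleftrightarrow> v$1 \<in> \<int> \<and> v$2 \<in> \<int>"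
  by (simp add: int_vec_def forall_2)

lemma int_vec_real3: "int_vec (v::real^3) \<longleftrightarrow> v$1 \<in> \<int> \<and> v$2 \<in> \<int> \<and> v$3 \<in> \<int>"
  by (simp add: int_vec_def forall_3)

lemma int_vec_add: "int_vec x \<Longrightarrow> int_vec y \<Longrightarrow> int_vec (x + y)"
  by (simp add: int_vec_def)

lemma int_vec_diff: "int_vec x \<Longrightarrow> int_vec y \<Longrightarrow> int_vec (x - y)"
  by (simp add: int_vec_def)

lemma int_vec_scaleR: "c \<in> \<int> \<Longrightarrow> int_vec x \<Longrightarrow> int_vec (c *\<^sub>R x)"
  by (simp add: int_vec_def)

lemma int_vec_inner: "int_vec x \<Longrightarrow> int_vec y \<Longrightarrow> x \<bullet> y \<in> \<int>"
  by (auto simp: int_vec_def inner_vec_def)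

lemma cross2_int: "int_vec x \<Longrightarrow> int_vec y \<Longrightarrow> cross2 x y \<in> \<int>"
  by (simp add: cross2_def int_vec_real2)

lemma det_hommat: "det (hommat a b c) = cross2 (b - a) (c - a)"
  unfolding hommat_def homrow_def cross2_def by (simp add: det_3 algebra_simps)

lemma collinear_if_cross2_eq_0:
  assumes "cross2 x y = 0"
  shows "collinear {0, x, y}"
proof (cases "x = 0")
  case False
  then have "x \<bullet> x \<noteq> 0" by simp
  then have "y = ((x \<bullet> y) / (x \<bullet> x)) *\<^sub>R x"
    using assms by (auto simp: vec_eq_iff forall_2 inner_real2 cross2_def field_simps)
  then show ?thesis by (metis collinear_lemma)
qed (simp add: collinear_lemma)

lemma cross2_nonzero_if_not_collinear:
  assumes "\<not> collinear {a, b, c}"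
  shows "cross2 (b - a) (c - a) \<noteq> 0"
proof
  assume "cross2 (b - a) (c - a) = 0"
  then have "collinear {0, b - a, c - a}" by (rule collinear_if_cross2_eq_0)
  then have "collinear {b, a, c}" by (simp add: collinear_3)
  with assms show False by (simp add: insert_commute)
qed

lemma scaleR_combination_eq_0_iff:
  assumes "cross2 x y \<noteq> 0"
  shows "s *\<^sub>R x + t *\<^sub>R y = 0 \<longleftrightarrow> s = 0 \<and> t = 0"
proof
  assume "s *\<^sub>R x + t *\<^sub>R y = 0"
  then have c: "s * x$1 + t * y$1 = 0" "s * x$2 + t * y$2 = 0"
    by (auto simp: vec_eq_iff forall_2)
  have "s * cross2 x y = y$2 * (s * x$1 + t * y$1) - y$1 * (s * x$2 + t * y$2)"
       "t * cross2 x y = x$1 * (s * x$2 + t * y$2) - x$2 * (s * x$1 + t * y$1)"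
    by (simp_all add: cross2_def algebra_simps)
  then have "s * cross2 x y = 0" "t * cross2 x y = 0" by (simp_all add: c)
  with assms show "s = 0 \<and> t = 0" by simp
qed simp

lemma orthogonal_to_both_eq_0:
  assumes "cross2 x y \<noteq> 0" "u \<bullet> x = 0" "u \<bullet> y = 0"
  shows "u = 0"
proof -
  have "u$1 * cross2 x y = y$2 * (u \<bullet> x) - x$2 * (u \<bullet> y)"
       "u$2 * cross2 x y = x$1 * (u \<bullet> y) - y$1 * (u \<bullet> x)"
    by (simp_all add: cross2_def inner_real2 algebra_simps)
  with assms show ?thesis by (simp add: vec_eq_iff forall_2)
qed

lemma cramer2:
  assumes "cross2 x y \<noteq> 0"
  shows "m = (cross2 m y / cross2 x y) *\<^sub>R x + (cross2 x m / cross2 x y) *\<^sub>R y"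
proof -
  have "cross2 m y *\<^sub>R x + cross2 x m *\<^sub>R y = cross2 x y *\<^sub>R m"
    by (simp add: vec_eq_iff forall_2 cross2_def algebra_simps)
  then have "(1 / cross2 x y) *\<^sub>R (cross2 m y *\<^sub>R x + cross2 x m *\<^sub>R y) = m"
    using assms by simp
  then show ?thesis by (simp add: scaleR_add_right)
qed

lemma unimodular_dual_solution:
  assumes "\<bar>cross2 x y\<bar> = 1" "a \<in> \<int>" "b \<in> \<int>" "int_vec x" "int_vec y"
  obtains u where "int_vec u" "u \<bullet> x = a" "u \<bullet> y = b"
proof
  let ?d = "cross2 x y"
  \<comment> \<open>Cramer's rule for the transposed system, where dividing by \<open>?d = \<plusminus>1\<close> is multiplying by it\<close>
  define u :: "real^2" where "u = ?d *\<^sub>R vector [a * y$2 - b * x$2, b * x$1 - a * y$1]"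
  have d2: "?d * ?d = 1" using assms(1) by (metis abs_mult_self_eq mult_1)
  have "?d \<in> \<int>" using assms(4,5) by (rule cross2_int)
  then show "int_vec u"
    using assms(2-5) unfolding u_def by (intro int_vec_scaleR) (auto simp: int_vec_real2)
  have "u \<bullet> x = a * (?d * ?d)" "u \<bullet> y = b * (?d * ?d)"
    by (simp_all add: u_def inner_real2 cross2_def algebra_simps)
  with d2 show "u \<bullet> x = a" "u \<bullet> y = b" by simp_all
qed

lemma lattice_point_in_empty_triangle:
  fixes p0 p1 p2 :: "real^2"
  assumes empty: "{z. int_vec z} \<inter> convex hull {p0, p1, p2} = {p0, p1, p2}"
    and nondeg: "cross2 (p1 - p0) (p2 - p0) \<noteq> 0"
    and st: "0 \<le> s" "0 \<le> t" "s + t \<le> 1"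
    and int: "int_vec (p0 + s *\<^sub>R (p1 - p0) + t *\<^sub>R (p2 - p0))"
  shows "(s = 0 \<and> t = 0) \<or> (s = 1 \<and> t = 0) \<or> (s = 0 \<and> t = 1)"
proof -
  define X where "X = p0 + s *\<^sub>R (p1 - p0) + t *\<^sub>R (p2 - p0)"
  have "X = (1 - s - t) *\<^sub>R p0 + s *\<^sub>R p1 + t *\<^sub>R p2"
    by (simp add: X_def algebra_simps)
  then have "X \<in> convex hull {p0, p1, p2}"
    unfolding convex_hull_3 using st by (intro CollectI exI[of _ "1 - s - t"] exI[of _ s] exI[of _ t]) auto
  with empty int have "X \<in> {p0, p1, p2}" unfolding X_def by blast
  moreover have "X - p0 = s *\<^sub>R (p1 - p0) + t *\<^sub>R (p2 - p0)"
    "X - p1 = (s - 1) *\<^sub>R (p1 - p0) + t *\<^sub>R (p2 - p0)"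
    "X - p2 = s *\<^sub>R (p1 - p0) + (t - 1) *\<^sub>R (p2 - p0)"
    by (simp_all add: X_def algebra_simps)
  ultimately show ?thesis
    using scaleR_combination_eq_0_iff[OF nondeg] by auto
qed

lemma empty_triangle_edge_coordinates_int:
  fixes p0 p1 p2 :: "real^2"
  assumes empty: "{z. int_vec z} \<inter> convex hull {p0, p1, p2} = {p0, p1, p2}"
    and nondeg: "cross2 (p1 - p0) (p2 - p0) \<noteq> 0"
    and int: "int_vec (s *\<^sub>R (p1 - p0) + t *\<^sub>R (p2 - p0))"
  shows "s \<in> \<int> \<and> t \<in> \<int>"
proof -
  let ?e = "p1 - p0" and ?g = "p2 - p0"
  have vertices: "int_vec p0" "int_vec p1" "int_vec p2" using empty by blast+
  have "int_vec (p0 + (s *\<^sub>R ?e + t *\<^sub>R ?g) - of_int \<lfloor>s\<rfloor> *\<^sub>R ?e - of_int \<lfloor>t\<rfloor> *\<^sub>R ?g)"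
    using vertices int by (intro int_vec_diff int_vec_add[OF _ int] int_vec_scaleR) auto
  moreover have "p0 + (s *\<^sub>R ?e + t *\<^sub>R ?g) - of_int \<lfloor>s\<rfloor> *\<^sub>R ?e - of_int \<lfloor>t\<rfloor> *\<^sub>R ?g
        = p0 + frac s *\<^sub>R ?e + frac t *\<^sub>R ?g"
    by (simp add: frac_def algebra_simps)
  ultimately have frac_int: "int_vec (p0 + frac s *\<^sub>R ?e + frac t *\<^sub>R ?g)" by simp
  show ?thesis
  proof (cases "frac s + frac t \<le> 1")
    case True
    from lattice_point_in_empty_triangle[OF empty nondeg _ _ True frac_int]
    show ?thesis using frac_lt_1[of s] frac_lt_1[of t] by auto
  next
    case False
    \<comment> \<open>the reflection through the midpoint of the edge p1 p2 has coordinates summing to less than 1\<close>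
    have "int_vec (p1 + p2 - (p0 + frac s *\<^sub>R ?e + frac t *\<^sub>R ?g))"
      using vertices frac_int by (intro int_vec_diff[OF int_vec_add]) simp_all
    moreover have "p1 + p2 - (p0 + frac s *\<^sub>R ?e + frac t *\<^sub>R ?g)
          = p0 + (1 - frac s) *\<^sub>R ?e + (1 - frac t) *\<^sub>R ?g"
      by (simp add: algebra_simps)
    ultimately have "int_vec (p0 + (1 - frac s) *\<^sub>R ?e + (1 - frac t) *\<^sub>R ?g)" by simp
    from lattice_point_in_empty_triangle[OF empty nondeg _ _ _ this] False
    show ?thesis using frac_lt_1[of s] frac_lt_1[of t] by auto
  qed
qed

lemma empty_lattice_triangle_unimodular:
  fixes p0 p1 p2 :: "real^2"
  assumes empty: "{z. int_vec z} \<inter> convex hull {p0, p1, p2} = {p0, p1, p2}"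
    and nondeg: "cross2 (p1 - p0) (p2 - p0) \<noteq> 0"
  shows "\<bar>cross2 (p1 - p0) (p2 - p0)\<bar> = 1"
proof -
  define e g where "e = p1 - p0" and "g = p2 - p0"
  define d where "d = cross2 e g"
  have "d \<noteq> 0" using nondeg by (simp add: d_def e_def g_def)
  have coords: "cross2 m g / d \<in> \<int> \<and> cross2 e m / d \<in> \<int>" if "int_vec m" for m
    using empty_triangle_edge_coordinates_int[OF empty nondeg] cramer2[OF nondeg, of m] that
    unfolding d_def e_def g_def by metis
  \<comment> \<open>the unit vectors have integer edge coordinates, so the inverse edge matrix is integral\<close>
  from coords[of "vector [1, 0]"] coords[of "vector [0, 1]"]
  have "int_vec ((1 / d) *\<^sub>R e)" "int_vec ((1 / d) *\<^sub>R g)"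
    by (auto simp: int_vec_real2 cross2_def)
  then have "cross2 ((1 / d) *\<^sub>R e) ((1 / d) *\<^sub>R g) \<in> \<int>" by (rule cross2_int)
  moreover have "cross2 ((1 / d) *\<^sub>R e) ((1 / d) *\<^sub>R g) = (1 / d) * (1 / d) * cross2 e g"
    by (simp add: cross2_def algebra_simps)
  ultimately have "1 / d \<in> \<int>" using \<open>d \<noteq> 0\<close> by (simp add: d_def[symmetric])
  moreover have "d \<in> \<int>" using empty unfolding d_def e_def g_def
    by (intro cross2_int int_vec_diff) blast+
  ultimately have "1 \<le> \<bar>d\<bar>" "1 \<le> \<bar>1 / d\<bar>"
    using \<open>d \<noteq> 0\<close> by (auto intro!: Ints_nonzero_abs_ge1 simp del: abs_divide)
  then have "\<bar>d\<bar> = 1" using \<open>d \<noteq> 0\<close> by (simp add: field_simps)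
  then show ?thesis by (simp add: d_def e_def g_def)
qed

lemma SUP_inner_convex_hull:
  fixes S :: "'a::real_inner set"
  assumes "finite S" "S \<noteq> {}"
  shows "(SUP x\<in>convex hull S. u \<bullet> x) = Max ((\<bullet>) u ` S)"
proof (rule cSup_eq_maximum)
  show "Max ((\<bullet>) u ` S) \<in> (\<bullet>) u ` (convex hull S)"
    using Max_in[of "(\<bullet>) u ` S"] assms hull_subset by fastforce
  have "convex hull S \<subseteq> {x. u \<bullet> x \<le> Max ((\<bullet>) u ` S)}"
    using assms by (intro hull_minimal convex_halfspace_le) auto
  then show "y \<le> Max ((\<bullet>) u ` S)" if "y \<in> (\<bullet>) u ` (convex hull S)" for y
    using that by auto
qed

lemma INF_inner_convex_hull:
  fixes S :: "'a::real_inner set"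
  assumes "finite S" "S \<noteq> {}"
  shows "(INF x\<in>convex hull S. u \<bullet> x) = Min ((\<bullet>) u ` S)"
proof (rule cInf_eq_minimum)
  show "Min ((\<bullet>) u ` S) \<in> (\<bullet>) u ` (convex hull S)"
    using Min_in[of "(\<bullet>) u ` S"] assms hull_subset by fastforce
  have "convex hull S \<subseteq> {x. u \<bullet> x \<ge> Min ((\<bullet>) u ` S)}"
    using assms by (intro hull_minimal convex_halfspace_ge) auto
  then show "Min ((\<bullet>) u ` S) \<le> y" if "y \<in> (\<bullet>) u ` (convex hull S)" for y
    using that by auto
qed

lemma max3_minus_min3:
  fixes a b c :: real
  shows "max a (max b c) - min a (min b c) = max \<bar>b - a\<bar> (max \<bar>c - b\<bar> \<bar>a - c\<bar>)"
  by (cases "a \<le> b"; cases "b \<le> c"; cases "a \<le> c") (simp_all add: max_def min_def abs_if)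

lemma width_fun_triangle:
  "width_fun (convex hull {a, b, c}) u = max \<bar>u \<bullet> b - u \<bullet> a\<bar> (max \<bar>u \<bullet> c - u \<bullet> b\<bar> \<bar>u \<bullet> a - u \<bullet> c\<bar>)"
  by (simp add: width_fun_def SUP_inner_convex_hull INF_inner_convex_hull max3_minus_min3)

lemma hommat_mult_vector:
  "hommat a b c *v vector [u$1, u$2, t] = vector [u \<bullet> a + t, u \<bullet> b + t, u \<bullet> c + t]"
  unfolding hommat_def homrow_def
  by (simp add: matrix_vector_mult_def vec_eq_iff forall_3 sum_3 inner_real2 algebra_simps)

lemma infnorm_real3: "infnorm (vector [a, b, c] :: real^3) = max \<bar>a\<bar> (max \<bar>b\<bar> \<bar>c\<bar>)"
proof -
  have "{\<bar>(vector [a, b, c] :: real^3) $ i\<bar> | i. i \<in> UNIV} = (\<lambda>i. \<bar>(vector [a, b, c] :: real^3) $ i\<bar>) ` UNIV"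
    by blast
  then show ?thesis by (simp add: infnorm_cart UNIV_3 cSup_eq_Max max.assoc)
qed

lemma Dmat_mult_vector: "Dmat *v vector [x, y, z] = vector [y - x, z - y, x - z]"
  unfolding Dmat_def by (simp add: matrix_vector_mult_def vec_eq_iff forall_3 sum_3)

lemma infnorm_Dmat_affine_values:
  "infnorm (Dmat *v vector [u \<bullet> a + t, u \<bullet> b + t, u \<bullet> c + t]) = width_fun (convex hull {a, b, c}) u"
  by (simp add: Dmat_mult_vector infnorm_real3 width_fun_triangle)

lemma inner_vertices_not_all_equal:
  assumes "cross2 (p1 - p0) (p2 - p0) \<noteq> 0" "u \<noteq> 0"
  shows "\<not> (u \<bullet> p0 = u \<bullet> p1 \<and> u \<bullet> p1 = u \<bullet> p2)"
proof
  assume "u \<bullet> p0 = u \<bullet> p1 \<and> u \<bullet> p1 = u \<bullet> p2"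
  then have "u \<bullet> (p1 - p0) = 0" "u \<bullet> (p2 - p0) = 0" by (simp_all add: inner_diff_right)
  with orthogonal_to_both_eq_0[OF assms(1)] assms(2) show False by blast
qed

lemma nonconstant_int_vectors_eq_affine_values:
  fixes p0 p1 p2 :: "real^2"
  assumes empty: "{z. int_vec z} \<inter> convex hull {p0, p1, p2} = {p0, p1, p2}"
    and nondeg: "cross2 (p1 - p0) (p2 - p0) \<noteq> 0"
  shows "{z::real^3. int_vec z \<and> \<not> (z $ 1 = z $ 2 \<and> z $ 2 = z $ 3)}
       = (\<lambda>(u, t). vector [u \<bullet> p0 + t, u \<bullet> p1 + t, u \<bullet> p2 + t]) ` ({u. int_vec u \<and> u \<noteq> 0} \<times> \<int>)"
    (is "?Z = ?f ` (?U \<times> \<int>)")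
proof
  have vertices: "int_vec p0" "int_vec p1" "int_vec p2" using empty by blast+
  show "?f ` (?U \<times> \<int>) \<subseteq> ?Z"
    using inner_vertices_not_all_equal[OF nondeg] vertices by (auto simp: int_vec_real3 int_vec_inner)
  show "?Z \<subseteq> ?f ` (?U \<times> \<int>)"
  proof
    fix z :: "real^3"
    assume "z \<in> ?Z"
    then have int: "z$1 \<in> \<int>" "z$2 \<in> \<int>" "z$3 \<in> \<int>" and nonconst: "\<not> (z$1 = z$2 \<and> z$2 = z$3)"
      by (auto simp: int_vec_real3)
    obtain u where u: "int_vec u" "u \<bullet> (p1 - p0) = z$2 - z$1" "u \<bullet> (p2 - p0) = z$3 - z$1"
      using unimodular_dual_solution[OF empty_lattice_triangle_unimodular[OF empty nondeg]]
        int vertices by (metis Ints_diff int_vec_diff)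
    define t where "t = z$1 - u \<bullet> p0"
    have "z = ?f (u, t)"
      using u by (simp add: t_def vec_eq_iff forall_3 inner_diff_right algebra_simps)
    moreover have "u \<noteq> 0" using nonconst u by auto
    moreover have "t \<in> \<int>" using int vertices u by (simp add: t_def int_vec_inner)
    ultimately show "z \<in> ?f ` (?U \<times> \<int>)" using u by blast
  qed
qed

lemma lattice_width_barycentric:
  fixes p0 p1 p2 q0 q1 q2 :: "real^2" and B :: "real^3^3"
  assumes empty: "{z. int_vec z} \<inter> convex hull {p0, p1, p2} = {p0, p1, p2}"
    and nondeg: "cross2 (p1 - p0) (p2 - p0) \<noteq> 0"
    and bary: "hommat q0 q1 q2 = B ** hommat p0 p1 p2"
  shows "lattice_width (convex hull {q0, q1, q2}) =
         (INF z\<in>{z::real^3. int_vec z \<and> \<not> (z $ 1 = z $ 2 \<and> z $ 2 = z $ 3)}.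
            infnorm (Dmat *v (B *v z)))"
proof -
  let ?U = "{u::real^2. int_vec u \<and> u \<noteq> 0}"
  let ?w = "width_fun (convex hull {q0, q1, q2})"
  have "B *v vector [u \<bullet> p0 + t, u \<bullet> p1 + t, u \<bullet> p2 + t] = vector [u \<bullet> q0 + t, u \<bullet> q1 + t, u \<bullet> q2 + t]"
    for u t
    by (metis hommat_mult_vector matrix_vector_mul_assoc bary)
  then have "(\<lambda>z. infnorm (Dmat *v (B *v z))) `
               {z::real^3. int_vec z \<and> \<not> (z $ 1 = z $ 2 \<and> z $ 2 = z $ 3)}
           = (\<lambda>(u, t). ?w u) ` (?U \<times> (\<int> :: real set))"
    unfolding nonconstant_int_vectors_eq_affine_values[OF empty nondeg] image_image
    by (simp add: case_prod_beta infnorm_Dmat_affine_values)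
  also have "\<dots> = ?w ` ?U"
  proof
    show "(\<lambda>(u, t). ?w u) ` (?U \<times> \<int>) \<subseteq> ?w ` ?U" by auto
    show "?w ` ?U \<subseteq> (\<lambda>(u, t). ?w u) ` (?U \<times> (\<int> :: real set))"
    proof
      fix v
      assume "v \<in> ?w ` ?U"
      then obtain u where "u \<in> ?U" "v = ?w u" by blast
      then show "v \<in> (\<lambda>(u, t). ?w u) ` (?U \<times> (\<int> :: real set))"
        by (intro image_eqI[of v _ "(u, 0)"]) auto
    qed
  qed
  finally show ?thesis by (simp add: lattice_width_def)
qed

lemma zero_sum_int_triples_eq_edge_values:
  fixes F :: "real \<Rightarrow> real \<Rightarrow> real \<Rightarrow> 'a" and p0 p1 p2 :: "real^2"
  assumes empty: "{z. int_vec z} \<inter> convex hull {p0, p1, p2} = {p0, p1, p2}"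
    and nondeg: "cross2 (p1 - p0) (p2 - p0) \<noteq> 0"
  shows "{F (of_int y0) (of_int y1) (of_int y2) | y0 y1 y2 :: int. (y0, y1, y2) \<noteq> (0, 0, 0) \<and> y0 + y1 + y2 = 0}
       = (\<lambda>u. F (u \<bullet> p1 - u \<bullet> p2) (u \<bullet> p2 - u \<bullet> p0) (u \<bullet> p0 - u \<bullet> p1)) ` {u. int_vec u \<and> u \<noteq> 0}"
    (is "?T = ?f ` ?U")
proof
  have vertices: "int_vec p0" "int_vec p1" "int_vec p2" using empty by blast+
  show "?T \<subseteq> ?f ` ?U"
  proof
    fix v
    assume "v \<in> ?T"
    then obtain y0 y1 y2 :: int where y: "(y0, y1, y2) \<noteq> (0, 0, 0)" "y0 + y1 + y2 = 0"
      and v: "v = F (of_int y0) (of_int y1) (of_int y2)"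
      by blast
    obtain u where u: "int_vec u" "u \<bullet> (p1 - p0) = - of_int y2" "u \<bullet> (p2 - p0) = of_int y1"
      using unimodular_dual_solution[OF empty_lattice_triangle_unimodular[OF empty nondeg]]
        vertices by (metis Ints_minus Ints_of_int int_vec_diff)
    have "of_int y0 = - of_int y1 - (of_int y2 :: real)" using y(2) by linarith
    with u have "u \<bullet> p1 - u \<bullet> p2 = of_int y0" "u \<bullet> p2 - u \<bullet> p0 = of_int y1"
      "u \<bullet> p0 - u \<bullet> p1 = of_int y2"
      by (simp_all add: inner_diff_right)
    then have "v = ?f u" by (simp add: v)
    moreover have "u \<noteq> 0" using u y by auto
    ultimately show "v \<in> ?f ` ?U" using u by blast
  qed
  show "?f ` ?U \<subseteq> ?T"
  proof
    fix v
    assume "v \<in> ?f ` ?U"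
    then obtain u where u: "int_vec u" "u \<noteq> 0" and v: "v = ?f u" by blast
    have "u \<bullet> p1 - u \<bullet> p2 \<in> \<int>" "u \<bullet> p2 - u \<bullet> p0 \<in> \<int>" "u \<bullet> p0 - u \<bullet> p1 \<in> \<int>"
      using u vertices by (simp_all add: int_vec_inner)
    then obtain y0 y1 y2 where y: "of_int y0 = u \<bullet> p1 - u \<bullet> p2" "of_int y1 = u \<bullet> p2 - u \<bullet> p0"
      "of_int y2 = u \<bullet> p0 - u \<bullet> p1"
      by (metis Ints_cases)
    have "real_of_int (y0 + y1 + y2) = 0" using y by simp
    then have "y0 + y1 + y2 = 0" by linarith
    moreover have "(y0, y1, y2) \<noteq> (0, 0, 0)"
      using inner_vertices_not_all_equal[OF nondeg u(2)] y by auto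
    ultimately show "v \<in> ?T" unfolding v y[symmetric] by blast
  qed
qed

lemma Inf_mult_left_image:
  fixes S :: "real set"
  assumes "0 < c" "S \<noteq> {}" "bdd_below S"
  shows "Inf ((\<lambda>x. c * x) ` S) = c * Inf S"
proof -
  have mono: "mono (\<lambda>x. c * x)" using assms(1) by (simp add: mono_def mult_left_mono)
  have cont: "continuous (at_right (Inf S)) (\<lambda>x. c * x)" by (intro continuous_intros)
  show ?thesis using continuous_at_Inf_mono[OF mono cont assms(2,3)] by simp
qed

lemma measure_lebesgue_triangle:
  "measure lebesgue (convex hull {a, b, c :: real^2}) = \<bar>cross2 (b - a) (c - a)\<bar> / 2"
proof -
  have "convex hull {a, b, c} \<in> sets lborel"
    by (simp add: compact_imp_closed finite_imp_compact_convex_hull)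
  then have "measure lebesgue (convex hull {a, b, c}) = measure lborel (convex hull {a, b, c})"
    by (rule measure_completion)
  moreover have "(c $ 1 - a $ 1) * (b $ 2 - a $ 2) - (b $ 1 - a $ 1) * (c $ 2 - a $ 2)
      = - cross2 (b - a) (c - a)"
    by (simp add: cross2_def algebra_simps)
  ultimately show ?thesis
    using content_triangle[of a b c] by simp
qed

context
  fixes p0 p1 p2 q0 q1 q2 :: "real^2" and x0 x1 x2 :: real
  assumes circ: "p0 = (1 - x0) *\<^sub>R q1 + x0 *\<^sub>R q2" "p1 = (1 - x1) *\<^sub>R q2 + x1 *\<^sub>R q0"
    "p2 = (1 - x2) *\<^sub>R q0 + x2 *\<^sub>R q1"
begin

lemma circumscribed_cross2:
  "cross2 (p1 - p0) (p2 - p0)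
     = (x0 * x1 * x2 + (1 - x0) * (1 - x1) * (1 - x2)) * cross2 (q1 - q0) (q2 - q0)"
  unfolding circ cross2_def vector_add_component vector_minus_component vector_scaleR_component
    real_scaleR_def
  by algebra

lemma circumscribed_edge_values:
  fixes u :: "real^2"
  defines "X \<equiv> x0 * x1 * x2 + (1 - x0) * (1 - x1) * (1 - x2)"
  shows "x0 * (u \<bullet> p1 - u \<bullet> p2) + (1 - x1) * (u \<bullet> p2 - u \<bullet> p0) = X * (u \<bullet> q0 - u \<bullet> q1)"
    and "x1 * (u \<bullet> p2 - u \<bullet> p0) + (1 - x2) * (u \<bullet> p0 - u \<bullet> p1) = X * (u \<bullet> q1 - u \<bullet> q2)"
    and "x2 * (u \<bullet> p0 - u \<bullet> p1) + (1 - x0) * (u \<bullet> p1 - u \<bullet> p2) = X * (u \<bullet> q2 - u \<bullet> q0)"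
  unfolding circ X_def inner_add_right inner_scaleR_right by algebra+

lemma circumscribed_lattice_width:
  assumes empty: "{z. int_vec z} \<inter> convex hull {p0, p1, p2} = {p0, p1, p2}"
    and nondeg: "cross2 (p1 - p0) (p2 - p0) \<noteq> 0"
    and x: "0 < x0" "x0 < 1" "0 < x1" "x1 < 1" "0 < x2" "x2 < 1"
  shows "lattice_width (convex hull {q0, q1, q2}) =
           Inf {max \<bar>x0 * of_int y0 + (1 - x1) * of_int y1\<bar>
                   (max \<bar>x1 * of_int y1 + (1 - x2) * of_int y2\<bar>
                        \<bar>x2 * of_int y2 + (1 - x0) * of_int y0\<bar>)
                | y0 y1 y2 :: int. (y0, y1, y2) \<noteq> (0, 0, 0) \<and> y0 + y1 + y2 = 0}
           / (x0 * x1 * x2 + (1 - x0) * (1 - x1) * (1 - x2))"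
proof -
  define X where "X = x0 * x1 * x2 + (1 - x0) * (1 - x1) * (1 - x2)"
  have "0 < X" using x unfolding X_def by (simp add: add_pos_nonneg)
  let ?U = "{u::real^2. int_vec u \<and> u \<noteq> 0}"
  let ?w = "width_fun (convex hull {q0, q1, q2})"
  have "max \<bar>x0 * (u \<bullet> p1 - u \<bullet> p2) + (1 - x1) * (u \<bullet> p2 - u \<bullet> p0)\<bar>
          (max \<bar>x1 * (u \<bullet> p2 - u \<bullet> p0) + (1 - x2) * (u \<bullet> p0 - u \<bullet> p1)\<bar>
               \<bar>x2 * (u \<bullet> p0 - u \<bullet> p1) + (1 - x0) * (u \<bullet> p1 - u \<bullet> p2)\<bar>) = X * ?w u" for u
  proof -
    have "\<bar>X * (u \<bullet> q0 - u \<bullet> q1)\<bar> = X * \<bar>u \<bullet> q1 - u \<bullet> q0\<bar>"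
      "\<bar>X * (u \<bullet> q1 - u \<bullet> q2)\<bar> = X * \<bar>u \<bullet> q2 - u \<bullet> q1\<bar>"
      "\<bar>X * (u \<bullet> q2 - u \<bullet> q0)\<bar> = X * \<bar>u \<bullet> q0 - u \<bullet> q2\<bar>"
      using \<open>0 < X\<close> by (simp_all add: abs_mult abs_minus_commute)
    then show ?thesis
      using \<open>0 < X\<close> unfolding circumscribed_edge_values[of u, folded X_def] width_fun_triangle
      by (simp add: max_mult_distrib_left)
  qed
  then have "Inf {max \<bar>x0 * of_int y0 + (1 - x1) * of_int y1\<bar>
                   (max \<bar>x1 * of_int y1 + (1 - x2) * of_int y2\<bar>
                        \<bar>x2 * of_int y2 + (1 - x0) * of_int y0\<bar>)
                | y0 y1 y2 :: int. (y0, y1, y2) \<noteq> (0, 0, 0) \<and> y0 + y1 + y2 = 0}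
           = Inf ((\<lambda>x. X * x) ` (?w ` ?U))"
    using zero_sum_int_triples_eq_edge_values[OF empty nondeg, of "\<lambda>a b c.
            max \<bar>x0 * a + (1 - x1) * b\<bar> (max \<bar>x1 * b + (1 - x2) * c\<bar> \<bar>x2 * c + (1 - x0) * a\<bar>)"]
    by (simp add: image_image)
  also have "\<dots> = X * lattice_width (convex hull {q0, q1, q2})"
  proof (unfold lattice_width_def, rule Inf_mult_left_image[OF \<open>0 < X\<close>])
    have "(vector [1, 0] :: real^2) \<in> ?U" by (auto simp: int_vec_real2 vec_eq_iff forall_2)
    then show "?w ` ?U \<noteq> {}" by blast
    show "bdd_below (?w ` ?U)" by (rule bdd_belowI2[of _ 0]) (simp add: width_fun_triangle)
  qed
  finally show ?thesis using \<open>0 < X\<close> by (simp add: X_def)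
qed

lemma circumscribed_area:
  assumes empty: "{z. int_vec z} \<inter> convex hull {p0, p1, p2} = {p0, p1, p2}"
    and nondeg: "cross2 (p1 - p0) (p2 - p0) \<noteq> 0"
    and x: "0 < x0" "x0 < 1" "0 < x1" "x1 < 1" "0 < x2" "x2 < 1"
  shows "measure lebesgue (convex hull {q0, q1, q2}) =
           1 / (2 * (x0 * x1 * x2 + (1 - x0) * (1 - x1) * (1 - x2)))"
proof -
  define X where "X = x0 * x1 * x2 + (1 - x0) * (1 - x1) * (1 - x2)"
  have "0 < X" using x unfolding X_def by (simp add: add_pos_nonneg)
  have "X * \<bar>cross2 (q1 - q0) (q2 - q0)\<bar> = 1"
    using empty_lattice_triangle_unimodular[OF empty nondeg] \<open>0 < X\<close>
    unfolding circumscribed_cross2 X_def[symmetric] abs_mult by simp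
  then have "\<bar>cross2 (q1 - q0) (q2 - q0)\<bar> / 2 = 1 / (2 * X)"
    using \<open>0 < X\<close> by (simp add: field_simps)
  then show ?thesis
    unfolding X_def measure_lebesgue_triangle .
qed

end

theorem lemma12:
  fixes p0 p1 p2 q0 q1 q2 :: "real^2" and B :: "real^3^3"
  assumes P_empty: "{z. int_vec z} \<inter> convex hull {p0, p1, p2} = {p0, p1, p2}"
    and Q_triangle: "\<not> collinear {q0, q1, q2}"
    and bary: "hommat q0 q1 q2 = B ** hommat p0 p1 p2"
  shows "lattice_width (convex hull {q0, q1, q2}) =
           (INF z\<in>{z::real^3. int_vec z \<and> \<not> (z $ 1 = z $ 2 \<and> z $ 2 = z $ 3)}.
              infnorm (Dmat *v (B *v z)))
       \<and> (\<forall>x0 x1 x2 :: real.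
            p0 = (1 - x0) *\<^sub>R q1 + x0 *\<^sub>R q2 \<and>
            p1 = (1 - x1) *\<^sub>R q2 + x1 *\<^sub>R q0 \<and>
            p2 = (1 - x2) *\<^sub>R q0 + x2 *\<^sub>R q1 \<and>
            0 < x0 \<and> x0 < 1 \<and> 0 < x1 \<and> x1 < 1 \<and> 0 < x2 \<and> x2 < 1
          \<longrightarrow>
            lattice_width (convex hull {q0, q1, q2}) =
              Inf {max \<bar>x0 * of_int y0 + (1 - x1) * of_int y1\<bar>
                      (max \<bar>x1 * of_int y1 + (1 - x2) * of_int y2\<bar>
                           \<bar>x2 * of_int y2 + (1 - x0) * of_int y0\<bar>)
                   | y0 y1 y2 :: int. (y0, y1, y2) \<noteq> (0, 0, 0) \<and> y0 + y1 + y2 = 0}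
              / (x0 * x1 * x2 + (1 - x0) * (1 - x1) * (1 - x2))
          \<and> measure lebesgue (convex hull {q0, q1, q2}) =
              1 / (2 * (x0 * x1 * x2 + (1 - x0) * (1 - x1) * (1 - x2))))"
proof -
  have "det (hommat q0 q1 q2) \<noteq> 0"
    using cross2_nonzero_if_not_collinear[OF Q_triangle] by (simp add: det_hommat)
  then have nondeg: "cross2 (p1 - p0) (p2 - p0) \<noteq> 0"
    unfolding bary det_mul by (simp add: det_hommat)
  show ?thesis
    by (intro conjI allI impI; (elim conjE)?;
        rule lattice_width_barycentric[OF P_empty nondeg bary]
          circumscribed_lattice_width[OF _ _ _ P_empty nondeg]
          circumscribed_area[OF _ _ _ P_empty nondeg])
qed

end
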